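(* Fix $\lambda>0$, $L\ge2$, an index $l\in\{1,\dots,L\}$, $\alpha_i\in\mathbb{C}$, $r_i>0$, a unit vector ${\bm\kappa}_i=(\Phi_i,\Psi_i,\Theta_i)^T\in\mathbb{R}^3$, and for each $l'\neq l$ a complex number $V_{k,l,l'}$ and a real number $r_{i,l'}$. For ${\bf q}=(x,y,z)^T\in\mathbb{R}^3$ define $$r_{i,l}({\bf q})=r_i+x\Phi_i+y\Psi_i+z\Theta_i+\frac{x^2+y^2+z^2-(x\Phi_i+y\Psi_i+z\Theta_i)^2}{2r_i},$$ $$g_{k,i,l}({\bf q})=\sum_{l'\neq l}2|\alpha_i|^2|V_{k,l,l'}|\cos\!\Big(\frac{2\pi}{\lambda}\big(r_{i,l}({\bf q})-r_{i,l'}\big)+\angle V_{k,l,l'}\Big).$$ Let $S\subseteq\mathbb{R}^3$ be a convex set with $C_{\max}:=\sup_{{\bf q}\in S}\|{\bf q}\|^2<\infty$, and let $$\delta_{k,i,l}=\frac{2\pi}{\lambda}\sum_{l'\neq l}2|\alpha_i|^2|V_{k,l,l'}|\sqrt{\frac{2}{r_i^2}+\Big(\frac{2\pi}{\lambda}\Big)^2\Big(1+\frac{C_{\max}}{r_i^2}\Big)^2}.$$ Then for all ${\bf q}_l,{\bf q}_l^{(j)}\in S$, $$g_{k,i,l}({\bf q}_l)\ge g_{k,i,l}({\bf q}_l^{(j)})+\nabla g_{k,i,l}({\bf q}_l^{(j)})^T({\bf q}_l-{\bf q}_l^{(j)})-\frac{\delta_{k,i,l}}{2}\|{\bf q}_l-{\bf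 q}_l^{(j)}\|^2,$$ $$g_{k,i,l}({\bf q}_l)\le g_{k,i,l}({\bf q}_l^{(j)})+\nabla g_{k,i,l}({\bf q}_l^{(j)})^T({\bf q}_l-{\bf q}_l^{(j)})+\frac{\delta_{k,i,l}}{2}\|{\bf q}_l-{\bf q}_l^{(j)}\|^2.$$
   Context: $\angle z$ denotes the argument (phase) of a complex number $z$, and $\nabla g_{k,i,l}$ is the gradient of $g_{k,i,l}$ with respect to ${\bf q}\in\mathbb{R}^3$. In the paper, $r_{i,l}({\bf q})$ is the second-order Taylor approximation of the distance from user $i$ to UAV $l$ located at relative position ${\bf q}$, and $g_{k,i,l}$ is the part of $|{\bf v}_k^H{\bf h}_i|^2$ depending on UAV $l$'s position, with $V_{k,l,l'}=v_{k,l}v_{k,l'}^*$. *)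

theory Defs
  imports "HOL-Analysis.Analysis"
begin

text \<open>Second-order Taylor approximation of the distance from user i to UAV l at
  relative position q = (x,y,z); kappa = (Phi, Psi, Theta).\<close>
definition r_approx :: "real \<Rightarrow> real^3 \<Rightarrow> real^3 \<Rightarrow> real" where
  "r_approx ri kappa q =
     ri + q$1 * kappa$1 + q$2 * kappa$2 + q$3 * kappa$3
     + ((q$1)\<^sup>2 + (q$2)\<^sup>2 + (q$3)\<^sup>2
        - (q$1 * kappa$1 + q$2 * kappa$2 + q$3 * kappa$3)\<^sup>2) / (2 * ri)"

text \<open>g_{k,i,l}(q); V l' = V_{k,l,l'}, rr l' = r_{i,l'}; sum over l' in {1..L} - {l}.\<close>
definition g_fun :: "real \<Rightarrow> nat \<Rightarrow> nat \<Rightarrow> complex \<Rightarrow> real \<Rightarrow> real^3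
      \<Rightarrow> (nat \<Rightarrow> complex) \<Rightarrow> (nat \<Rightarrow> real) \<Rightarrow> real^3 \<Rightarrow> real" where
  "g_fun lam L l alpha ri kappa V rr q =
     (\<Sum>l'\<in>{1..L} - {l}. 2 * (cmod alpha)\<^sup>2 * cmod (V l') *
        cos (2 * pi / lam * (r_approx ri kappa q - rr l') + Arg (V l')))"

definition delta_const :: "real \<Rightarrow> nat \<Rightarrow> nat \<Rightarrow> complex \<Rightarrow> real
      \<Rightarrow> (nat \<Rightarrow> complex) \<Rightarrow> real \<Rightarrow> real" where
  "delta_const lam L l alpha ri V Cmax =
     2 * pi / lam * (\<Sum>l'\<in>{1..L} - {l}. 2 * (cmod alpha)\<^sup>2 * cmod (V l') *
        sqrt (2 / ri\<^sup>2 + (2 * pi / lam)\<^sup>2 * (1 + Cmax / ri\<^sup>2)\<^sup>2))"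

end

theory Submission
  imports Defs
begin

(* Write d = q - q_j and c = 2 pi / lambda. By Taylor's theorem with Lagrange remainder for
   t |-> g (q_j + t d) on [0, 1], it suffices to bound the second directional derivative of g
   along d by delta ||d||^2 at every point of the segment, which lies in S. Since r_{i,l} is
   quadratic, each summand of that second derivative has the form
   -cos theta (c r')^2 - sin theta (c r''), where r' is the directional derivative of r_{i,l}
   and r'' = (||d||^2 - (d . kappa)^2) / r_i is constant. Cauchy-Schwarz gives
   r'^2 <= (1 + C_max / r_i^2) ||d||^2 and 0 <= r'' <= ||d||^2 / r_i, and
   |a cos theta + b sin theta| <= sqrt (a^2 + b^2) combines the two bounds. *)

lemma abs_cos_sin_combination_le:
  fixes a b x :: real
  shows "\<bar>a * cos x + b * sin x\<bar> \<le> sqrt (a\<^sup>2 + b\<^sup>2)"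
proof -
  have "(a * cos x + b * sin x)\<^sup>2 + (a * sin x - b * cos x)\<^sup>2 = (a\<^sup>2 + b\<^sup>2) * ((sin x)\<^sup>2 + (cos x)\<^sup>2)"
    by algebra
  then have "(a * cos x + b * sin x)\<^sup>2 + (a * sin x - b * cos x)\<^sup>2 = a\<^sup>2 + b\<^sup>2"
    by simp
  then have "(a * cos x + b * sin x)\<^sup>2 \<le> a\<^sup>2 + b\<^sup>2"
    using zero_le_power2[of "a * sin x - b * cos x"] by linarith
  then show ?thesis
    using real_sqrt_le_mono by fastforce
qed

lemma has_real_derivative_along_line:
  assumes "(f has_derivative f') (at (p + t *\<^sub>R d))"
  shows "((\<lambda>s. f (p + s *\<^sub>R d)) has_real_derivative f' d) (at t)"
proof -
  have line: "((\<lambda>s. p + s *\<^sub>R d) has_derivative (\<lambda>s. s *\<^sub>R d)) (at t)"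
    by (auto intro!: derivative_eq_intros)
  have "((\<lambda>s. f (p + s *\<^sub>R d)) has_derivative (\<lambda>s. f' (s *\<^sub>R d))) (at t)"
    using has_derivative_compose[OF line assms] .
  moreover have "(\<lambda>s. f' (s *\<^sub>R d)) = (*) (f' d)"
    using linear_scale[OF has_derivative_linear[OF assms]] by (auto simp: mult.commute)
  ultimately show ?thesis
    by (simp add: has_field_derivative_def)
qed

lemma taylor_second_order_along_segment:
  fixes f :: "'a::real_normed_vector \<Rightarrow> real"
  assumes f': "\<And>x. (f has_derivative f' x) (at x)"
    and f'': "\<And>t. 0 \<le> t \<Longrightarrow> t \<le> 1 \<Longrightarrow> ((\<lambda>s. f' (p + s *\<^sub>R d) d) has_real_derivative f'' t) (at t)"
    and bound: "\<And>t. 0 \<le> t \<Longrightarrow> t \<le> 1 \<Longrightarrow> \<bar>f'' t\<bar> \<le> M"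
  shows "\<bar>f (p + d) - f p - f' p d\<bar> \<le> M / 2"
proof -
  have h': "((\<lambda>s. f (p + s *\<^sub>R d)) has_real_derivative f' (p + t *\<^sub>R d) d) (at t)" for t
    by (rule has_real_derivative_along_line[OF f'])
  define diff where "diff m = (if m = 0 then (\<lambda>s. f (p + s *\<^sub>R d))
    else if m = 1 then (\<lambda>s. f' (p + s *\<^sub>R d) d) else f'')" for m :: nat
  have "\<forall>m t. m < 2 \<and> 0 \<le> t \<and> t \<le> 1 \<longrightarrow> DERIV (diff m) t :> diff (Suc m) t"
    using h' f'' by (auto simp: diff_def less_2_cases_iff)
  then obtain t where t: "0 < t" "t < 1"
    and taylor: "f (p + d) = (\<Sum>m<2. diff m 0 / fact m) + f'' t / 2"
    using Taylor_up[of 2 diff "\<lambda>s. f (p + s *\<^sub>R d)" 0 1 0] by (auto simp: diff_def)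
  then have "\<bar>f (p + d) - f p - f' p d\<bar> = \<bar>f'' t\<bar> / 2"
    by (simp add: diff_def numeral_2_eq_2)
  then show ?thesis
    using bound[of t] t by simp
qed

definition r_approx_deriv :: "real \<Rightarrow> 'a::real_inner \<Rightarrow> 'a \<Rightarrow> 'a \<Rightarrow> real" where
  "r_approx_deriv ri kappa p d = d \<bullet> kappa + (p \<bullet> d - (p \<bullet> kappa) * (d \<bullet> kappa)) / ri"

definition r_approx_second_deriv :: "real \<Rightarrow> 'a::real_inner \<Rightarrow> 'a \<Rightarrow> real" where
  "r_approx_second_deriv ri kappa d = (d \<bullet> d - (d \<bullet> kappa)\<^sup>2) / ri"

lemma r_approx_eq_inner:
  "r_approx ri kappa q = ri + q \<bullet> kappa + (q \<bullet> q - (q \<bullet> kappa)\<^sup>2) / (2 * ri)"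
  by (simp add: r_approx_def inner_vec_def sum_3 power2_eq_square)

lemma has_derivative_r_approx:
  assumes "ri \<noteq> 0"
  shows "(r_approx ri kappa has_derivative r_approx_deriv ri kappa p) (at p)"
proof -
  have "((\<lambda>q. ri + q \<bullet> kappa + (q \<bullet> q - (q \<bullet> kappa)\<^sup>2) / (2 * ri)) has_derivative
      r_approx_deriv ri kappa p) (at p)"
    unfolding r_approx_deriv_def using assms
    by (auto intro!: derivative_eq_intros simp: fun_eq_iff field_simps inner_commute)
  then show ?thesis
    by (simp add: r_approx_eq_inner[abs_def])
qed

lemma r_approx_deriv_along_line:
  assumes "ri \<noteq> 0"
  shows "r_approx_deriv ri kappa (p + t *\<^sub>R d) d =
    r_approx_deriv ri kappa p d + t * r_approx_second_deriv ri kappa d"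
  using assms
  by (simp add: r_approx_deriv_def r_approx_second_deriv_def inner_add_left field_simps power2_eq_square)

lemma r_approx_deriv_sq_le:
  fixes kappa :: "'a::real_inner"
  assumes ri: "ri > 0" and kappa: "norm kappa = 1" and p: "(norm p)\<^sup>2 \<le> C"
  shows "(r_approx_deriv ri kappa p d)\<^sup>2 \<le> (1 + C / ri\<^sup>2) * (norm d)\<^sup>2"
proof -
  define v where "v = kappa + (1 / ri) *\<^sub>R (p - (p \<bullet> kappa) *\<^sub>R kappa)"
  have kk: "kappa \<bullet> kappa = 1"
    using kappa by (simp add: dot_square_norm)
  have deriv: "r_approx_deriv ri kappa p d = v \<bullet> d"
    using ri by (simp add: v_def r_approx_deriv_def algebra_simps inner_commute
        add_divide_distrib diff_divide_distrib)
  have "v \<bullet> v = 1 + (p \<bullet> p - (p \<bullet> kappa)\<^sup>2) / ri\<^sup>2"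
    using ri kk by (simp add: v_def inner_add_left inner_add_right inner_diff_left inner_diff_right
        field_simps inner_commute power2_eq_square)
  moreover have "p \<bullet> p - (p \<bullet> kappa)\<^sup>2 \<le> C"
    using p zero_le_power2[of "p \<bullet> kappa"] unfolding power2_norm_eq_inner by linarith
  ultimately have vv: "v \<bullet> v \<le> 1 + C / ri\<^sup>2"
    by (simp add: divide_right_mono)
  have "(v \<bullet> d)\<^sup>2 \<le> (v \<bullet> v) * (norm d)\<^sup>2"
    using Cauchy_Schwarz_ineq[of v d] by (simp add: power2_norm_eq_inner)
  also have "\<dots> \<le> (1 + C / ri\<^sup>2) * (norm d)\<^sup>2"
    using vv by (rule mult_right_mono) simp
  finally show ?thesis
    unfolding deriv .
qed

lemma r_approx_second_deriv_bounds:
  fixes kappa :: "'a::real_inner"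
  assumes ri: "ri > 0" and kappa: "norm kappa = 1"
  shows "0 \<le> r_approx_second_deriv ri kappa d" and "r_approx_second_deriv ri kappa d \<le> (norm d)\<^sup>2 / ri"
proof -
  have "(d \<bullet> kappa)\<^sup>2 \<le> d \<bullet> d"
    using Cauchy_Schwarz_ineq[of d kappa] kappa by (simp add: dot_square_norm)
  then show "0 \<le> r_approx_second_deriv ri kappa d"
    using ri by (simp add: r_approx_second_deriv_def)
  show "r_approx_second_deriv ri kappa d \<le> (norm d)\<^sup>2 / ri"
    using ri by (simp add: r_approx_second_deriv_def divide_right_mono dot_square_norm)
qed

definition g_phase :: "real \<Rightarrow> real \<Rightarrow> real^3 \<Rightarrow> (nat \<Rightarrow> complex) \<Rightarrow> (nat \<Rightarrow> real)
      \<Rightarrow> nat \<Rightarrow> real^3 \<Rightarrow> real" where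
  "g_phase lam ri kappa V rr l' q = 2 * pi / lam * (r_approx ri kappa q - rr l') + Arg (V l')"

definition g_deriv :: "real \<Rightarrow> nat \<Rightarrow> nat \<Rightarrow> complex \<Rightarrow> real \<Rightarrow> real^3
      \<Rightarrow> (nat \<Rightarrow> complex) \<Rightarrow> (nat \<Rightarrow> real) \<Rightarrow> real^3 \<Rightarrow> real^3 \<Rightarrow> real" where
  "g_deriv lam L l alpha ri kappa V rr q d =
     (\<Sum>l'\<in>{1..L} - {l}. 2 * (cmod alpha)\<^sup>2 * cmod (V l') *
        (- sin (g_phase lam ri kappa V rr l' q) * (2 * pi / lam * r_approx_deriv ri kappa q d)))"

definition g_second_deriv :: "real \<Rightarrow> nat \<Rightarrow> nat \<Rightarrow> complex \<Rightarrow> real \<Rightarrow> real^3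
      \<Rightarrow> (nat \<Rightarrow> complex) \<Rightarrow> (nat \<Rightarrow> real) \<Rightarrow> real^3 \<Rightarrow> real^3 \<Rightarrow> real" where
  "g_second_deriv lam L l alpha ri kappa V rr q d =
     (\<Sum>l'\<in>{1..L} - {l}. 2 * (cmod alpha)\<^sup>2 * cmod (V l') *
        (- cos (g_phase lam ri kappa V rr l' q) * (2 * pi / lam * r_approx_deriv ri kappa q d)\<^sup>2
         - sin (g_phase lam ri kappa V rr l' q) * (2 * pi / lam * r_approx_second_deriv ri kappa d)))"

lemma has_derivative_g_phase:
  assumes "ri \<noteq> 0"
  shows "(g_phase lam ri kappa V rr l' has_derivative (\<lambda>d. 2 * pi / lam * r_approx_deriv ri kappa q d)) (at q)"
  unfolding g_phase_def
  by (rule derivative_eq_intros has_derivative_r_approx[OF assms] refl | simp)+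

lemma has_derivative_g_fun:
  assumes "ri \<noteq> 0"
  shows "(g_fun lam L l alpha ri kappa V rr has_derivative g_deriv lam L l alpha ri kappa V rr q) (at q)"
  unfolding g_fun_def g_deriv_def g_phase_def[symmetric]
  by (rule derivative_eq_intros has_derivative_g_phase[OF assms] refl | simp)+
    (simp add: fun_eq_iff algebra_simps)

lemma has_real_derivative_g_deriv_along_line:
  assumes ri: "ri \<noteq> 0"
  shows "((\<lambda>s. g_deriv lam L l alpha ri kappa V rr (p + s *\<^sub>R d) d) has_real_derivative
      g_second_deriv lam L l alpha ri kappa V rr (p + t *\<^sub>R d) d) (at t)"
proof -
  note phase = has_real_derivative_along_line[OF has_derivative_g_phase[OF ri]]
  show ?thesis
    unfolding g_deriv_def g_second_deriv_def r_approx_deriv_along_line[OF ri]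
    by (rule derivative_eq_intros phase refl | simp)+
      (auto simp: r_approx_deriv_along_line[OF ri] power2_eq_square algebra_simps intro!: sum.cong)
qed

lemma abs_cos_phase_second_deriv_le:
  fixes c ri A B P n x :: real
  assumes c: "c \<ge> 0" and ri: "ri > 0" and A: "A\<^sup>2 \<le> P * n" and B: "0 \<le> B" "B \<le> n / ri"
  shows "\<bar>- cos x * (c * A)\<^sup>2 - sin x * (c * B)\<bar> \<le> c * n * sqrt (2 / ri\<^sup>2 + c\<^sup>2 * P\<^sup>2)"
proof -
  have "0 \<le> n / ri"
    using B by linarith
  then have n: "n \<ge> 0"
    using ri by (simp add: zero_le_divide_iff)
  have "(c\<^sup>2 * A\<^sup>2)\<^sup>2 \<le> (c\<^sup>2 * (P * n))\<^sup>2"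
    using A by (intro power_mono mult_left_mono) auto
  then have first: "((c * A)\<^sup>2)\<^sup>2 \<le> (c * n)\<^sup>2 * (c\<^sup>2 * P\<^sup>2)"
    by (simp add: power_mult_distrib algebra_simps)
  have "(c * B)\<^sup>2 \<le> (c * (n / ri))\<^sup>2"
    using B c by (intro power_mono mult_left_mono) auto
  also have "\<dots> \<le> (c * n)\<^sup>2 * (2 / ri\<^sup>2)"
    by (simp add: power_mult_distrib power_divide divide_right_mono)
  finally have second: "(c * B)\<^sup>2 \<le> (c * n)\<^sup>2 * (2 / ri\<^sup>2)" .
  have "\<bar>- cos x * (c * A)\<^sup>2 - sin x * (c * B)\<bar> = \<bar>(- (c * A)\<^sup>2) * cos x + (- (c * B)) * sin x\<bar>"
    by (simp add: algebra_simps)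
  also have "\<dots> \<le> sqrt (((c * A)\<^sup>2)\<^sup>2 + (c * B)\<^sup>2)"
    using abs_cos_sin_combination_le[of "- (c * A)\<^sup>2" x "- (c * B)"] by simp
  also have "\<dots> \<le> sqrt ((c * n)\<^sup>2 * (2 / ri\<^sup>2 + c\<^sup>2 * P\<^sup>2))"
    using first second by (intro real_sqrt_le_mono) (simp add: algebra_simps)
  also have "\<dots> = c * n * sqrt (2 / ri\<^sup>2 + c\<^sup>2 * P\<^sup>2)"
    using c n by (simp add: real_sqrt_mult)
  finally show ?thesis .
qed

lemma abs_g_second_deriv_le:
  assumes lam: "lam > 0" and ri: "ri > 0" and kappa: "norm kappa = 1" and p: "(norm p)\<^sup>2 \<le> C"
  shows "\<bar>g_second_deriv lam L l alpha ri kappa V rr p d\<bar> \<le> delta_const lam L l alpha ri V C * (norm d)\<^sup>2"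
proof -
  let ?c = "2 * pi / lam"
  let ?K = "sqrt (2 / ri\<^sup>2 + ?c\<^sup>2 * (1 + C / ri\<^sup>2)\<^sup>2)"
  have summand: "\<bar>- cos x * (?c * r_approx_deriv ri kappa p d)\<^sup>2 - sin x * (?c * r_approx_second_deriv ri kappa d)\<bar>
      \<le> ?c * (norm d)\<^sup>2 * ?K" for x
    using lam ri r_approx_deriv_sq_le[OF ri kappa p] r_approx_second_deriv_bounds[OF ri kappa]
    by (intro abs_cos_phase_second_deriv_le) auto
  have "\<bar>g_second_deriv lam L l alpha ri kappa V rr p d\<bar>
      \<le> (\<Sum>l'\<in>{1..L} - {l}. 2 * (cmod alpha)\<^sup>2 * cmod (V l') * (?c * (norm d)\<^sup>2 * ?K))"
    unfolding g_second_deriv_def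
  proof (rule order_trans[OF sum_abs sum_mono])
    fix l'
    have w: "0 \<le> 2 * (cmod alpha)\<^sup>2 * cmod (V l')"
      by simp
    show "\<bar>2 * (cmod alpha)\<^sup>2 * cmod (V l') *
          (- cos (g_phase lam ri kappa V rr l' p) * (?c * r_approx_deriv ri kappa p d)\<^sup>2
           - sin (g_phase lam ri kappa V rr l' p) * (?c * r_approx_second_deriv ri kappa d))\<bar>
        \<le> 2 * (cmod alpha)\<^sup>2 * cmod (V l') * (?c * (norm d)\<^sup>2 * ?K)"
      unfolding abs_mult[of "2 * (cmod alpha)\<^sup>2 * cmod (V l')"] abs_of_nonneg[OF w]
      by (rule mult_left_mono[OF summand w])
  qed
  also have "\<dots> = delta_const lam L l alpha ri V C * (norm d)\<^sup>2"
    unfolding delta_const_def sum_distrib_left sum_distrib_right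
    by (rule sum.cong) (simp_all add: algebra_simps)
  finally show ?thesis .
qed

theorem lemma1:
  fixes lam ri :: real and L l :: nat and alpha :: complex and kappa :: "real^3"
    and V :: "nat \<Rightarrow> complex" and rr :: "nat \<Rightarrow> real" and S :: "(real^3) set"
    and q qj :: "real^3"
  assumes "lam > 0" and "L \<ge> 2" and "l \<in> {1..L}" and "ri > 0" and "norm kappa = 1"
    and "convex S" and "bdd_above ((\<lambda>p. (norm p)\<^sup>2) ` S)"
    and "q \<in> S" and "qj \<in> S"
  shows
   "g_fun lam L l alpha ri kappa V rr q \<ge>
      g_fun lam L l alpha ri kappa V rr qj
      + frechet_derivative (g_fun lam L l alpha ri kappa V rr) (at qj) (q - qj)
      - delta_const lam L l alpha ri V (SUP p\<in>S. (norm p)\<^sup>2) / 2 * (norm (q - qj))\<^sup>2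
    \<and> g_fun lam L l alpha ri kappa V rr q \<le>
      g_fun lam L l alpha ri kappa V rr qj
      + frechet_derivative (g_fun lam L l alpha ri kappa V rr) (at qj) (q - qj)
      + delta_const lam L l alpha ri V (SUP p\<in>S. (norm p)\<^sup>2) / 2 * (norm (q - qj))\<^sup>2"
proof -
  let ?g = "g_fun lam L l alpha ri kappa V rr"
  let ?g' = "g_deriv lam L l alpha ri kappa V rr"
  let ?\<delta> = "delta_const lam L l alpha ri V (SUP p\<in>S. (norm p)\<^sup>2)"
  define d where "d = q - qj"
  have ri: "ri \<noteq> 0"
    using assms(4) by simp
  have bounded_on_segment: "(norm (qj + t *\<^sub>R d))\<^sup>2 \<le> (SUP p\<in>S. (norm p)\<^sup>2)" if "0 \<le> t" "t \<le> 1" for t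
  proof -
    have "qj + t *\<^sub>R d = (1 - t) *\<^sub>R qj + t *\<^sub>R q"
      by (simp add: d_def algebra_simps)
    also have "\<dots> \<in> S"
      using assms(6,8,9) that by (simp add: convex_alt)
    finally show ?thesis
      by (rule cSUP_upper2[OF assms(7)]) simp
  qed
  have "\<bar>?g (qj + d) - ?g qj - ?g' qj d\<bar> \<le> ?\<delta> * (norm d)\<^sup>2 / 2"
  proof (rule taylor_second_order_along_segment)
    show "(?g has_derivative ?g' x) (at x)" for x
      using has_derivative_g_fun[OF ri] .
    show "((\<lambda>s. ?g' (qj + s *\<^sub>R d) d) has_real_derivative
        g_second_deriv lam L l alpha ri kappa V rr (qj + t *\<^sub>R d) d) (at t)" for t
      using has_real_derivative_g_deriv_along_line[OF ri] .
    show "\<bar>g_second_deriv lam L l alpha ri kappa V rr (qj + t *\<^sub>R d) d\<bar> \<le> ?\<delta> * (norm d)\<^sup>2"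
      if "0 \<le> t" "t \<le> 1" for t
      using abs_g_second_deriv_le[OF assms(1,4,5) bounded_on_segment[OF that]] .
  qed
  then have "\<bar>?g q - ?g qj - ?g' qj (q - qj)\<bar> \<le> ?\<delta> / 2 * (norm (q - qj))\<^sup>2"
    by (simp add: d_def)
  moreover have "frechet_derivative ?g (at qj) = ?g' qj"
    using frechet_derivative_at[OF has_derivative_g_fun[OF ri]] by simp
  ultimately show ?thesis
    unfolding abs_le_iff by auto
qed

end
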